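(* Let $a\in\mathbb{Z}$ and $m\in\mathbb{Z}$ with $m>0$, and let $s$, $m_s$, $a_0$, $d_i$, $d_i^1$ be as in the context. Then: (i) $a=a_0\,d_0^1d_1^1\cdots d_{s-1}^1$; (ii) $m=d_0d_1\cdots d_{s-1}\,m_s=(d_0^1)^1(d_1^1)^2(d_2^1)^3\cdots(d_{s-1}^1)^s\,m_s$, so in particular $m_s\mid m$; (iii) $\gcd(a_0,m_s)=1$ and $\gcd(d_i^1,m_s)=1$ for all $0\le i\le s-1$; consequently $\gcd(a,m_s)=1$ and $a^{\varphi(m_s)}\equiv 1\pmod{m_s}$.
   Context: $\gcd$ denotes the greatest common divisor, always chosen positive, with the convention $\gcd(0,n)=n$ for $n>0$. $\varphi$ denotes Euler's totient function. Let $a\in\mathbb{Z}$ and $m\in\mathbb{Z}$ with $m>0$. The sequences are defined as follows. - Put $d_0=\gcd(a,m)$, $a_0=a/d_0$ and $m_0=m/d_0$. - For $i\ge 1$, and only as long as $d_{i-1}\neq 1$, put $d_i=\gcd(d_{i-1},m_{i-1})$, $m_i=m_{i-1}/d_i$ and $d_{i-1}^1=d_{i-1}/d_i$. The index $s\ge 0$ is the least index with $d_s=1$; such an index exists. Empty products equal $1$, so when $s=0$ the statements read $a=a_0$ and $m=m_0$. *)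

theory Defs
  imports "HOL-Number_Theory.Number_Theory"
begin

text \<open>The pair (d_i, m_i). The recursion is defined for all i; once d_{i-1} = 1
  it continues with d_i = gcd 1 _ = 1, m_i = m_{i-1}, which does not affect
  any index below the least s with d_s = 1.\<close>
fun dm_seq :: "int \<Rightarrow> int \<Rightarrow> nat \<Rightarrow> int \<times> int" where
  "dm_seq a m 0 = (gcd a m, m div gcd a m)"
| "dm_seq a m (Suc i) =
     (let d = fst (dm_seq a m i); mm = snd (dm_seq a m i); d' = gcd d mm
      in (d', mm div d'))"

definition dseq :: "int \<Rightarrow> int \<Rightarrow> nat \<Rightarrow> int" where
  "dseq a m i = fst (dm_seq a m i)"

definition mseq :: "int \<Rightarrow> int \<Rightarrow> nat \<Rightarrow> int" where
  "mseq a m i = snd (dm_seq a m i)"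

definition a0 :: "int \<Rightarrow> int \<Rightarrow> int" where
  "a0 a m = a div gcd a m"

definition d1seq :: "int \<Rightarrow> int \<Rightarrow> nat \<Rightarrow> int" where
  "d1seq a m i = dseq a m i div dseq a m (Suc i)"

definition sidx :: "int \<Rightarrow> int \<Rightarrow> nat" where
  "sidx a m = (LEAST i. dseq a m i = 1)"

end

theory Submission
  imports Defs
begin

text \<open>Since m_i = d_{i+1} m_{i+1}, we have m = d_0 \<cdots> d_k m_k, and as long as d_k \<noteq> 1
  the m_k at least halve, so some d_s = 1. The d_i form a divisor chain, so
  d_0 = d_0^1 \<cdots> d_{s-1}^1 d_s telescopes, and substituting d_i = d_i^1 \<cdots> d_{s-1}^1 into
  d_0 \<cdots> d_{s-1} gives the power product. Coprimality rests on the invariant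
  gcd(d_0, m_k) | d_k: at k = s it makes m_s coprime to d_0 and hence to its divisors d_i^1;
  a_0 is coprime to m_0, a multiple of m_s, so a = a_0 d_0 is coprime to m_s and Euler's
  theorem applies.\<close>

lemma dseq_0 [simp]: "dseq a m 0 = gcd a m"
  and mseq_0 [simp]: "mseq a m 0 = m div gcd a m"
  by (simp_all add: dseq_def mseq_def)

lemma dseq_Suc: "dseq a m (Suc i) = gcd (dseq a m i) (mseq a m i)"
  and mseq_Suc: "mseq a m (Suc i) = mseq a m i div dseq a m (Suc i)"
  by (simp_all add: dseq_def mseq_def Let_def)

lemma dseq_nonneg: "dseq a m i \<ge> 0"
  by (cases i) (simp_all add: dseq_Suc)

lemma dseq_Suc_dvd: "dseq a m (Suc i) dvd dseq a m i"
  by (simp add: dseq_Suc)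

lemma dseq_Suc_mult_mseq_Suc: "dseq a m (Suc i) * mseq a m (Suc i) = mseq a m i"
  by (simp add: dseq_Suc mseq_Suc)

lemma mseq_Suc_dvd: "mseq a m (Suc i) dvd mseq a m i"
  by (metis dseq_Suc_mult_mseq_Suc dvd_triv_right)

lemma dseq_dvd_gcd: "dseq a m i dvd gcd a m"
  by (induction i) (auto intro: dvd_trans dseq_Suc_dvd)

lemma mseq_dvd_mseq_0: "mseq a m i dvd mseq a m 0"
  by (induction i) (auto intro: dvd_trans mseq_Suc_dvd)

lemma dseq_eq_d1seq_mult: "dseq a m i = d1seq a m i * dseq a m (Suc i)"
  unfolding d1seq_def using dseq_Suc_dvd by simp

lemma d1seq_dvd_gcd: "d1seq a m i dvd gcd a m"
  by (metis dseq_eq_d1seq_mult dseq_dvd_gcd dvd_mult_left)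

lemma gcd_eq_prod_d1seq_mult_dseq: "gcd a m = (\<Prod>i<k. d1seq a m i) * dseq a m k"
proof (induction k)
  case (Suc k)
  then show ?case using dseq_eq_d1seq_mult[of a m k] by (simp add: mult.assoc)
qed simp

lemma eq_prod_dseq_mult_mseq: "m = (\<Prod>i<Suc k. dseq a m i) * mseq a m k"
proof (induction k)
  case (Suc k)
  then show ?case using dseq_Suc_mult_mseq_Suc[of a m k] by (simp add: mult.assoc)
qed simp

lemma prod_dseq_eq_prod_d1seq_power:
  "(\<Prod>i<k. dseq a m i) = (\<Prod>i<k. d1seq a m i ^ (i + 1)) * dseq a m k ^ k"
proof (induction k)
  case (Suc k)
  have "(\<Prod>i<Suc k. dseq a m i) = (\<Prod>i<k. d1seq a m i ^ (i + 1)) * dseq a m k ^ Suc k"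
    using Suc by simp
  also have "\<dots> = (\<Prod>i<k. d1seq a m i ^ (i + 1)) * (d1seq a m k * dseq a m (Suc k)) ^ Suc k"
    using dseq_eq_d1seq_mult[of a m k] by simp
  finally show ?case by (simp add: power_mult_distrib mult_ac)
qed simp

lemma mseq_dvd: "mseq a m k dvd m"
  by (metis eq_prod_dseq_mult_mseq dvd_triv_right)

lemma mseq_pos: "m > 0 \<Longrightarrow> mseq a m k > 0"
proof -
  assume "m > 0"
  moreover have "(\<Prod>i<Suc k. dseq a m i) \<ge> 0" by (simp add: prod_nonneg dseq_nonneg)
  ultimately show ?thesis
    using eq_prod_dseq_mult_mseq[of m a k] by (metis zero_less_mult_iff not_less)
qed

lemma dseq_pos: "m > 0 \<Longrightarrow> dseq a m i > 0"
  using dseq_dvd_gcd[of a m i] dseq_nonneg[of a m i] by (auto simp: order_less_le)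

lemma ex_dseq_eq_1:
  assumes "m > 0"
  shows "\<exists>i. dseq a m i = 1"
proof (rule ccontr)
  assume no_1: "\<nexists>i. dseq a m i = 1"
  have d_ge_2: "dseq a m i \<ge> 2" for i
  proof -
    have "dseq a m i \<noteq> 1" using no_1 by blast
    with dseq_pos[OF assms, of a i] show ?thesis by linarith
  qed
  have "mseq a m i + int i \<le> m" for i
  proof (induction i)
    case 0
    show ?case using mseq_dvd[of a m 0] assms by (simp add: zdvd_imp_le)
  next
    case (Suc i)
    have "2 * mseq a m (Suc i) \<le> dseq a m (Suc i) * mseq a m (Suc i)"
      using d_ge_2 mseq_pos[OF assms] by (intro mult_right_mono) (auto intro: less_imp_le)
    then have "2 * mseq a m (Suc i) \<le> mseq a m i"
      by (simp only: dseq_Suc_mult_mseq_Suc)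
    then show ?case using Suc mseq_pos[OF assms, of a "Suc i"] by linarith
  qed
  from this[of "nat m"] mseq_pos[OF assms, of a "nat m"] assms show False by linarith
qed

lemma dseq_sidx: "m > 0 \<Longrightarrow> dseq a m (sidx a m) = 1"
  unfolding sidx_def using ex_dseq_eq_1 by (rule LeastI_ex)

lemma gcd_gcd_mseq_dvd_dseq: "gcd (gcd a m) (mseq a m k) dvd dseq a m k"
proof (induction k)
  case (Suc k)
  have "gcd (gcd a m) (mseq a m (Suc k)) dvd gcd (gcd a m) (mseq a m k)"
    using mseq_Suc_dvd by (meson dvd_trans gcd_dvd1 gcd_dvd2 gcd_greatest)
  with Suc have "gcd (gcd a m) (mseq a m (Suc k)) dvd gcd (dseq a m k) (mseq a m k)"
    by (meson dvd_trans gcd_dvd2 gcd_greatest mseq_Suc_dvd)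
  then show ?case by (simp add: dseq_Suc)
qed (metis dseq_0 gcd_dvd1)

lemma coprime_gcd_mseq: "dseq a m k = 1 \<Longrightarrow> coprime (gcd a m) (mseq a m k)"
  using gcd_gcd_mseq_dvd_dseq[of a m k] by (simp add: coprime_iff_gcd_eq_1)

lemma coprime_a0_mseq: "a \<noteq> 0 \<or> m \<noteq> 0 \<Longrightarrow> coprime (a0 a m) (mseq a m k)"
  unfolding a0_def
  by (metis div_gcd_coprime mseq_0 mseq_dvd_mseq_0 coprime_divisors dvd_refl)

lemma coprime_imp_cong_power_totient_int:
  fixes a n :: int
  assumes "coprime a n"
  shows "[a ^ totient (nat n) = 1] (mod n)"
proof (cases "n \<le> 1")
  case True
  then have "n = 1 \<or> nat n = 0" by linarith
  then show ?thesis by auto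
next
  case False
  then have "residues n" by (simp add: residues_def)
  then show ?thesis using assms by (rule residues.euler_theorem)
qed

theorem mainTheorem4:
  fixes a m :: int
  assumes "m > 0"
  defines "s \<equiv> sidx a m"
  shows "(\<exists>i. dseq a m i = 1)
    \<and> a = a0 a m * (\<Prod>i<s. d1seq a m i)
    \<and> m = (\<Prod>i<s. dseq a m i) * mseq a m s
    \<and> m = (\<Prod>i<s. d1seq a m i ^ (i + 1)) * mseq a m s
    \<and> mseq a m s dvd m
    \<and> gcd (a0 a m) (mseq a m s) = 1
    \<and> (\<forall>i<s. gcd (d1seq a m i) (mseq a m s) = 1)
    \<and> gcd a (mseq a m s) = 1
    \<and> [a ^ totient (nat (mseq a m s)) = 1] (mod (mseq a m s))"
proof -
  have ds: "dseq a m s = 1" unfolding s_def using assms(1) by (rule dseq_sidx)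
  have a_eq: "a = a0 a m * gcd a m" by (simp add: a0_def)
  have m_eq: "m = (\<Prod>i<s. dseq a m i) * mseq a m s"
    using eq_prod_dseq_mult_mseq[of m a s] ds by simp
  have coprime_gcd: "coprime (gcd a m) (mseq a m s)"
    using ds by (rule coprime_gcd_mseq)
  have coprime_a0: "coprime (a0 a m) (mseq a m s)"
    using assms(1) by (intro coprime_a0_mseq) simp
  have "\<forall>i<s. coprime (d1seq a m i) (mseq a m s)"
    using coprime_gcd d1seq_dvd_gcd coprime_divisors dvd_refl by blast
  moreover have coprime_a: "coprime a (mseq a m s)"
    using coprime_a0 coprime_gcd a_eq by (metis coprime_mult_left_iff)
  ultimately show ?thesis
    using ex_dseq_eq_1[OF assms(1)] a_eq gcd_eq_prod_d1seq_mult_dseq[of a m s] ds m_eq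
      prod_dseq_eq_prod_d1seq_power[of a m s] mseq_dvd coprime_a0
      coprime_imp_cong_power_totient_int[OF coprime_a]
    by (simp add: coprime_iff_gcd_eq_1)
qed

end
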